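(* Let $(\mathcal{P},\Sigma,\mu)$ be a measure space with $\mathcal{P}\subseteq\mathbb{C}^{n_p}$, such that $\overline{\mathsf{p}}\in\mathcal{P}$ for all $\mathsf{p}\in\mathcal{P}$, $\overline{S}\in\Sigma$ for all $S\in\Sigma$, and $\mu(\overline{S})=\mu(S)$ for all $S\in\Sigma$. Let $q_A,q_B,q_C,r,n_f,n_o$ be positive integers and let $\hat\alpha_i,\hat\beta_j,\hat\gamma_k:\mathcal{P}\to\mathbb{C}$ ($i=1,\dots,q_A$, $j=1,\dots,q_B$, $k=1,\dots,q_C$) be measurable functions satisfying $f(\overline{\mathsf{p}})=\overline{f(\mathsf{p})}$ for all $\mathsf{p}\in\mathcal{P}$ (for each such function $f$), and \[ \int_{\mathcal{P}}\left(\frac{\sum_{j=1}^{q_B}|\hat\beta_j(\mathsf{p})|\,\sum_{k=1}^{q_C}|\hat\gamma_k(\mathsf{p})|}{\sum_{i=1}^{q_A}|\hat\alpha_i(\mathsf{p})|}\right)^{2}\,d\mu(\mathsf{p})<\infty . \] Let $R=(\mathbb{R}^{r\times r})^{q_A}\times(\mathbb{R}^{r\times n_f})^{q_B}\times(\mathbb{R}^{n_o\times r})^{q_C}$, and for a tuple $(\hat A_i,\hat B_j,\hat C_k)\in R$ set $\hat{\mathcal{A}}(\mathsf{p})=\sum_{i=1}^{q_A}\hat\alpha_i(\mathsf{p})\hat A_i$, $\hat{\mathcal{B}}(\mathsf{p})=\sum_{j=1}^{q_B}\hat\beta_j(\mathsf{p})\hat B_j$, $\hat{\mathcal{C}}(\mathsf{p})=\sum_{k=1}^{q_C}\hat\gamma_k(\mathsf{p})\hat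 C_k$. Define \[ \mathcal{R}=\Big\{(\hat A_i,\hat B_j,\hat C_k)\in R:\ \operatorname*{ess\,sup}_{\mathsf{p}\in\mathcal{P}}\big\|\hat\alpha_i(\mathsf{p})\hat{\mathcal{A}}(\mathsf{p})^{-1}\big\|_F<\infty,\ i=1,\dots,q_A\Big\}. \] Then $\mathcal{R}$ is an open subset of $R$. Moreover, for every $(\hat A_i,\hat B_j,\hat C_k)\in\mathcal{R}$, the function $\hat y(\mathsf{p})=\hat{\mathcal{C}}(\mathsf{p})\hat{\mathcal{A}}(\mathsf{p})^{-1}\hat{\mathcal{B}}(\mathsf{p})$ is square-integrable, i.e. $\int_{\mathcal{P}}\|\hat y(\mathsf{p})\|_F^2\,d\mu(\mathsf{p})<\infty$.
   Context: $\|\cdot\|_F$ is the Frobenius norm; $R$ is regarded as a finite-dimensional real vector space with its usual topology. The essential supremum is with respect to $\mu$ (the condition in the definition of $\mathcal{R}$ includes that $\hat{\mathcal{A}}(\mathsf{p})$ is invertible for $\mu$-almost every $\mathsf{p}$). *)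

theory Defs
  imports "HOL-Analysis.Analysis"
begin

definition conjv :: "complex^'n \<Rightarrow> complex^'n" where
  "conjv p = (\<chi> i. cnj (p $ i))"

definition ess_sup :: "'a measure \<Rightarrow> ('a \<Rightarrow> ereal) \<Rightarrow> ereal" where
  "ess_sup M f = Inf {c. AE x in M. f x \<le> c}"

definition pcomb :: "('q::finite \<Rightarrow> 'p \<Rightarrow> complex) \<Rightarrow> real^'m^'n^'q \<Rightarrow> 'p \<Rightarrow> complex^'m^'n" where
  "pcomb a X p = (\<chi> u v. \<Sum>i\<in>UNIV. a i p * complex_of_real (X $ i $ u $ v))"

definition frob :: "complex^'m^'n \<Rightarrow> real" where
  "frob X = sqrt (\<Sum>u\<in>UNIV. \<Sum>v\<in>UNIV. (cmod (X $ u $ v))\<^sup>2)"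

end

theory Submission
  imports Defs
begin

(* Write Ahat(p) = sum_i alpha_i(p) A_i and suppose |alpha_i(p) Ahat(p)^-1| <= K for all i and
   almost all p. A perturbation A_i + E_i changes Ahat(p) by Delta(p) = sum_i alpha_i(p) E_i, and
   |Ahat(p)^-1 Delta(p)| <= q_A K |E| uniformly in p. When this is at most 1/2, the identity
   Ahat(p)^-1 (Ahat(p) + Delta(p)) = I + Ahat(p)^-1 Delta(p) keeps the perturbed matrix invertible
   and at most doubles the bound K, so the set of admissible tuples is open.
   Summing the bounds over i gives |Ahat(p)^-1| <= q_A K / sum_i |alpha_i(p)|, hence
   |yhat(p)| <= q_A K |B| |C| sum_j |beta_j(p)| sum_k |gamma_k(p)| / sum_i |alpha_i(p)|,
   whose square is integrable by hypothesis. All norms are Frobenius norms, which are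
   submultiplicative by Cauchy-Schwarz. *)

lemma norm_vec_power2: "(norm (x::'a::real_normed_vector^'n))\<^sup>2 = (\<Sum>i\<in>UNIV. (norm (x$i))\<^sup>2)"
  unfolding norm_vec_def L2_set_def by (simp add: sum_nonneg)

lemma frob_eq_norm: "frob X = norm X"
  unfolding frob_def norm_vec_def L2_set_def by (simp add: sum_nonneg)

lemma norm_sum_mult_power2_le:
  fixes a b :: "'i \<Rightarrow> 'a::real_normed_algebra"
  shows "(norm (\<Sum>k\<in>S. a k * b k))\<^sup>2 \<le> (\<Sum>k\<in>S. (norm (a k))\<^sup>2) * (\<Sum>k\<in>S. (norm (b k))\<^sup>2)"
proof -
  have "norm (\<Sum>k\<in>S. a k * b k) \<le> (\<Sum>k\<in>S. norm (a k) * norm (b k))"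
    by (rule order.trans[OF norm_sum sum_mono[OF norm_mult_ineq]])
  hence "(norm (\<Sum>k\<in>S. a k * b k))\<^sup>2 \<le> (\<Sum>k\<in>S. norm (a k) * norm (b k))\<^sup>2"
    by (simp add: power_mono)
  also have "\<dots> \<le> (\<Sum>k\<in>S. (norm (a k))\<^sup>2) * (\<Sum>k\<in>S. (norm (b k))\<^sup>2)"
    by (rule Cauchy_Schwarz_ineq_sum)
  finally show ?thesis .
qed

lemma norm_matrix_mult_le:
  fixes A :: "'a::real_normed_algebra_1^'k^'n" and B :: "'a^'m^'k"
  shows "norm (A ** B) \<le> norm A * norm B"
proof -
  have "(norm (A ** B))\<^sup>2 = (\<Sum>u\<in>UNIV. \<Sum>v\<in>UNIV. (norm (\<Sum>k\<in>UNIV. A$u$k * B$k$v))\<^sup>2)"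
    unfolding norm_vec_power2 by (simp add: matrix_matrix_mult_def)
  also have "\<dots> \<le> (\<Sum>u\<in>UNIV. \<Sum>v\<in>UNIV. (\<Sum>k\<in>UNIV. (norm (A$u$k))\<^sup>2) * (\<Sum>k\<in>UNIV. (norm (B$k$v))\<^sup>2))"
    by (intro sum_mono norm_sum_mult_power2_le)
  also have "\<dots> = (\<Sum>u\<in>UNIV. \<Sum>k\<in>UNIV. (norm (A$u$k))\<^sup>2) * (\<Sum>v\<in>UNIV. \<Sum>k\<in>UNIV. (norm (B$k$v))\<^sup>2)"
    by (simp add: sum_product)
  also have "\<dots> = (norm A * norm B)\<^sup>2"
    unfolding power_mult_distrib norm_vec_power2
    by (subst sum.swap[of _ UNIV UNIV]) (rule refl)
  finally show ?thesis
    by (meson mult_nonneg_nonneg norm_ge_zero power2_le_imp_le)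
qed

lemma norm_matrix_vector_mult_le:
  fixes A :: "'a::real_normed_algebra_1^'k^'n"
  shows "norm (A *v x) \<le> norm A * norm x"
proof -
  have "(norm (A *v x))\<^sup>2 = (\<Sum>u\<in>UNIV. (norm (\<Sum>k\<in>UNIV. A$u$k * x$k))\<^sup>2)"
    unfolding norm_vec_power2 by (simp add: matrix_vector_mult_def)
  also have "\<dots> \<le> (\<Sum>u\<in>UNIV. (\<Sum>k\<in>UNIV. (norm (A$u$k))\<^sup>2) * (\<Sum>k\<in>UNIV. (norm (x$k))\<^sup>2))"
    by (intro sum_mono norm_sum_mult_power2_le)
  also have "\<dots> = (norm A * norm x)\<^sup>2"
    unfolding power_mult_distrib norm_vec_power2 by (simp add: sum_distrib_right)
  finally show ?thesis
    by (meson mult_nonneg_nonneg norm_ge_zero power2_le_imp_le)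
qed

lemma matrix_add_rdistrib: "(A + B) ** C = A ** C + B ** C"
  by (vector matrix_matrix_mult_def sum.distrib[symmetric] field_simps)

lemma matrix_mult_sum_right: "A ** (\<Sum>i\<in>S. f i) = (\<Sum>i\<in>S. A ** f i)"
  by (induction S rule: infinite_finite_induct) (auto simp: matrix_add_ldistrib)

lemma mat_matrix_mult_nth: "(mat c ** X) $ u $ v = c * X $ u $ v"
  by (simp add: matrix_matrix_mult_def mat_def if_distrib if_distribR sum.delta' cong: if_cong)

lemma mat_matrix_mult_commute:
  fixes X :: "'a::comm_semiring_1^'m^'n"
  shows "mat c ** X = X ** mat c"
  by (simp add: vec_eq_iff mat_matrix_mult_nth matrix_matrix_mult_def mat_def if_distrib if_distribR
      sum.delta' mult.commute cong: if_cong)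

lemma norm_mat_matrix_mult:
  fixes X :: "'a::real_normed_div_algebra^'m^'n"
  shows "norm (mat c ** X) = norm c * norm X"
proof -
  have "(norm (mat c ** X))\<^sup>2 = (norm c * norm X)\<^sup>2"
    unfolding norm_vec_power2 power_mult_distrib mat_matrix_mult_nth norm_mult
    by (simp add: sum_distrib_left)
  thus ?thesis by (simp add: power2_eq_iff_nonneg)
qed

lemma matrix_inv_mult:
  assumes "invertible A"
  shows "A ** matrix_inv A = mat 1" and "matrix_inv A ** A = mat 1"
  using someI_ex[OF assms[unfolded invertible_def]] by (simp_all add: matrix_inv_def)

lemma not_invertible_zero: "\<not> invertible (0::'a::semiring_1^'n^'m)"
  by (auto simp: invertible_def vec_eq_iff mat_def)

lemma invertible_add_small:
  fixes A D :: "'a::real_normed_field^'n^'n"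
  assumes inv: "invertible A" and small: "norm (matrix_inv A ** D) \<le> 1/2"
  shows "invertible (A + D)"
    and "norm (matrix_inv (A + D) ** N) \<le> 2 * norm (matrix_inv A ** N)"
proof -
  define X where "X = matrix_inv A ** D"
  have X_eq: "matrix_inv A ** (A + D) = mat 1 + X"
    by (simp add: X_def matrix_add_ldistrib matrix_inv_mult[OF inv])
  show inv': "invertible (A + D)"
    unfolding invertible_left_inverse matrix_left_invertible_ker
  proof (intro allI impI)
    fix x assume "(A + D) *v x = 0"
    hence "(matrix_inv A ** (A + D)) *v x = 0"
      by (metis matrix_vector_mul_assoc matrix_vector_mult_0_right)
    hence "x + X *v x = 0"
      by (simp add: X_eq matrix_vector_mult_add_rdistrib)
    hence "norm x = norm (X *v x)"
      by (metis add_eq_0_iff norm_minus_cancel)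
    also have "\<dots> \<le> 1/2 * norm x"
      using norm_matrix_vector_mult_le[of X x] mult_right_mono[OF small[folded X_def] norm_ge_zero[of x]]
      by linarith
    finally show "x = 0" by simp
  qed
  define Z where "Z = matrix_inv (A + D) ** N"
  have "Z + X ** Z = (mat 1 + X) ** Z"
    by (simp add: matrix_add_rdistrib)
  also have "\<dots> = matrix_inv A ** ((A + D) ** matrix_inv (A + D)) ** N"
    by (simp add: Z_def X_eq[symmetric] matrix_mul_assoc)
  also have "\<dots> = matrix_inv A ** N"
    by (simp add: matrix_inv_mult(1)[OF inv'])
  finally have "Z = matrix_inv A ** N - X ** Z"
    by (simp add: eq_diff_eq)
  hence "norm Z \<le> norm (matrix_inv A ** N) + norm (X ** Z)"
    by (metis norm_triangle_ineq4)
  also have "\<dots> \<le> norm (matrix_inv A ** N) + norm X * norm Z"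
    by (simp add: norm_matrix_mult_le)
  also have "\<dots> \<le> norm (matrix_inv A ** N) + 1/2 * norm Z"
    using mult_right_mono[OF small[folded X_def] norm_ge_zero] by simp
  finally show "norm (matrix_inv (A + D) ** N) \<le> 2 * norm (matrix_inv A ** N)"
    by (simp add: Z_def)
qed

definition of_real_matrix :: "real^'m^'n \<Rightarrow> complex^'m^'n" where
  "of_real_matrix X = (\<chi> u v. of_real (X $ u $ v))"

lemma norm_of_real_matrix: "norm (of_real_matrix X) = norm X"
proof -
  have "(norm (of_real_matrix X))\<^sup>2 = (norm X)\<^sup>2"
    unfolding norm_vec_power2 of_real_matrix_def by simp
  thus ?thesis by (simp add: power2_eq_iff_nonneg)
qed

lemma pcomb_eq_sum: "pcomb a X p = (\<Sum>i\<in>UNIV. mat (a i p) ** of_real_matrix (X $ i))"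
  by (simp add: vec_eq_iff pcomb_def sum_component mat_matrix_mult_nth of_real_matrix_def)

lemma pcomb_add: "pcomb a (X + Y) p = pcomb a X p + pcomb a Y p"
  by (simp add: vec_eq_iff pcomb_def sum.distrib[symmetric] algebra_simps)

lemma norm_pcomb_le: "norm (pcomb a X p) \<le> (\<Sum>i\<in>UNIV. cmod (a i p)) * norm X"
proof -
  have "norm (pcomb a X p) \<le> (\<Sum>i\<in>UNIV. norm (mat (a i p) ** of_real_matrix (X $ i)))"
    unfolding pcomb_eq_sum by (rule norm_sum)
  also have "\<dots> \<le> (\<Sum>i\<in>UNIV. cmod (a i p) * norm X)"
    unfolding norm_mat_matrix_mult norm_of_real_matrix
    by (intro sum_mono mult_left_mono) (auto simp: Finite_Cartesian_Product.norm_nth_le)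
  finally show ?thesis by (simp add: sum_distrib_right)
qed

lemma sum_cmod_coeffs_pos:
  assumes "invertible (pcomb a X p)"
  shows "0 < (\<Sum>i\<in>UNIV. cmod (a i p))"
proof -
  have "\<exists>i. a i p \<noteq> 0"
  proof (rule ccontr)
    assume "\<not> (\<exists>i. a i p \<noteq> 0)"
    hence "pcomb a X p = 0" by (simp add: pcomb_def vec_eq_iff)
    with assms show False by (simp add: not_invertible_zero)
  qed
  then obtain i where "a i p \<noteq> 0" by blast
  thus ?thesis by (intro sum_pos2[of UNIV i]) auto
qed

definition pcomb_inverse_bounded ::
    "('q::finite \<Rightarrow> 'p \<Rightarrow> complex) \<Rightarrow> real^'r^'r^'q \<Rightarrow> real \<Rightarrow> 'p \<Rightarrow> bool" where
  "pcomb_inverse_bounded a A K p \<longleftrightarrow> invertible (pcomb a A p) \<and>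
     (\<forall>i. norm (mat (a i p) ** matrix_inv (pcomb a A p)) \<le> K)"

lemma pcomb_inverse_bounded_mono:
  "pcomb_inverse_bounded a A K p \<Longrightarrow> K \<le> K' \<Longrightarrow> pcomb_inverse_bounded a A K' p"
  unfolding pcomb_inverse_bounded_def by (meson order.trans)

lemma pcomb_inverse_bounded_add_small:
  fixes a :: "'q::finite \<Rightarrow> 'p \<Rightarrow> complex"
  assumes bnd: "pcomb_inverse_bounded a A K p" and small: "real CARD('q) * K * norm E \<le> 1/2"
  shows "pcomb_inverse_bounded a (A + E) (2 * K) p"
proof -
  define Ai where "Ai = matrix_inv (pcomb a A p)"
  have inv: "invertible (pcomb a A p)" and Ai_bnd: "\<And>i. norm (mat (a i p) ** Ai) \<le> K"
    using bnd by (simp_all add: pcomb_inverse_bounded_def Ai_def)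
  have "Ai ** pcomb a E p = (\<Sum>i\<in>UNIV. (mat (a i p) ** Ai) ** of_real_matrix (E $ i))"
    by (simp add: pcomb_eq_sum matrix_mult_sum_right matrix_mul_assoc
        mat_matrix_mult_commute[of _ Ai, symmetric])
  hence "norm (Ai ** pcomb a E p) \<le> (\<Sum>i\<in>UNIV. norm ((mat (a i p) ** Ai) ** of_real_matrix (E $ i)))"
    by (simp add: norm_sum)
  also have "\<dots> \<le> (\<Sum>i\<in>(UNIV::'q set). K * norm E)"
    by (intro sum_mono order.trans[OF norm_matrix_mult_le] mult_mono Ai_bnd)
       (auto simp: norm_of_real_matrix Finite_Cartesian_Product.norm_nth_le
          order.trans[OF norm_ge_zero Ai_bnd])
  also have "\<dots> \<le> 1/2" using small by simp
  finally have "norm (Ai ** pcomb a E p) \<le> 1/2" .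
  note perturbed = invertible_add_small[OF inv this[unfolded Ai_def]]
  have "norm (mat (a i p) ** matrix_inv (pcomb a (A + E) p)) \<le> 2 * K" for i
    using perturbed(2)[of "mat (a i p)"] Ai_bnd[of i]
    by (simp add: pcomb_add mat_matrix_mult_commute Ai_def)
  with perturbed(1) show ?thesis
    by (simp add: pcomb_inverse_bounded_def pcomb_add)
qed

lemma norm_matrix_inv_pcomb_le:
  fixes a :: "'q::finite \<Rightarrow> 'p \<Rightarrow> complex"
  assumes "pcomb_inverse_bounded a A K p"
  shows "(\<Sum>i\<in>UNIV. cmod (a i p)) * norm (matrix_inv (pcomb a A p)) \<le> real CARD('q) * K"
proof -
  have "(\<Sum>i\<in>UNIV. cmod (a i p)) * norm (matrix_inv (pcomb a A p))
      = (\<Sum>i\<in>UNIV. norm (mat (a i p) ** matrix_inv (pcomb a A p)))"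
    by (simp add: norm_mat_matrix_mult sum_distrib_right)
  also have "\<dots> \<le> (\<Sum>i\<in>(UNIV::'q set). K)"
    using assms by (intro sum_mono) (simp add: pcomb_inverse_bounded_def)
  finally show ?thesis by simp
qed

lemma norm_transfer_le:
  fixes a :: "'qa::finite \<Rightarrow> 'p \<Rightarrow> complex" and b :: "'qb::finite \<Rightarrow> 'p \<Rightarrow> complex"
    and g :: "'qc::finite \<Rightarrow> 'p \<Rightarrow> complex"
  assumes bnd: "pcomb_inverse_bounded a A K p"
  shows "norm (pcomb g C p ** matrix_inv (pcomb a A p) ** pcomb b B p)
      \<le> real CARD('qa) * K * norm C * norm B *
         ((\<Sum>j\<in>UNIV. cmod (b j p)) * (\<Sum>k\<in>UNIV. cmod (g k p)) / (\<Sum>i\<in>UNIV. cmod (a i p)))"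
proof -
  define Sa where "Sa = (\<Sum>i\<in>UNIV. cmod (a i p))"
  define Sb where "Sb = (\<Sum>j\<in>UNIV. cmod (b j p))"
  define Sg where "Sg = (\<Sum>k\<in>UNIV. cmod (g k p))"
  have Sa_pos: "0 < Sa"
    using bnd sum_cmod_coeffs_pos by (auto simp: Sa_def pcomb_inverse_bounded_def)
  have "0 \<le> Sa * norm (matrix_inv (pcomb a A p))" using Sa_pos by simp
  hence K_nonneg: "0 \<le> real CARD('qa) * K"
    using norm_matrix_inv_pcomb_le[OF bnd] unfolding Sa_def by linarith
  have inv_le: "norm (matrix_inv (pcomb a A p)) \<le> real CARD('qa) * K / Sa"
    using norm_matrix_inv_pcomb_le[OF bnd] Sa_pos by (simp add: Sa_def field_simps)
  have "norm (pcomb g C p ** matrix_inv (pcomb a A p) ** pcomb b B p)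
      \<le> norm (pcomb g C p) * norm (matrix_inv (pcomb a A p)) * norm (pcomb b B p)"
    by (meson order.trans norm_matrix_mult_le mult_right_mono norm_ge_zero)
  also have "\<dots> \<le> (Sg * norm C) * (real CARD('qa) * K / Sa) * (Sb * norm B)"
    using Sa_pos K_nonneg
    by (intro mult_mono inv_le norm_pcomb_le[of g C p, folded Sg_def]
        norm_pcomb_le[of b B p, folded Sb_def]) (auto simp: Sg_def sum_nonneg)
  also have "\<dots> = real CARD('qa) * K * norm C * norm B * (Sb * Sg / Sa)"
    by (simp add: field_simps)
  finally show ?thesis by (simp add: Sa_def Sb_def Sg_def)
qed

lemma ess_sup_less_top_iff: "ess_sup M (\<lambda>x. ereal (f x)) < \<infinity> \<longleftrightarrow> (\<exists>K. AE x in M. f x \<le> K)"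
proof
  assume "ess_sup M (\<lambda>x. ereal (f x)) < \<infinity>"
  hence "\<exists>c\<in>{c. AE x in M. ereal (f x) \<le> c}. c < \<infinity>"
    unfolding ess_sup_def by (simp only: Inf_less_iff)
  then obtain c where c: "AE x in M. ereal (f x) \<le> c" and "c < \<infinity>" by blast
  hence "c \<le> ereal (real_of_ereal c)" by (cases c) auto
  with c have "AE x in M. f x \<le> real_of_ereal c"
    by (auto elim!: eventually_mono dest: order.trans)
  thus "\<exists>K. AE x in M. f x \<le> K" ..
next
  assume "\<exists>K. AE x in M. f x \<le> K"
  then obtain K where "AE x in M. f x \<le> K" ..
  hence "ess_sup M (\<lambda>x. ereal (f x)) \<le> ereal K"
    unfolding ess_sup_def by (auto intro!: Inf_lower elim!: eventually_mono)
  thus "ess_sup M (\<lambda>x. ereal (f x)) < \<infinity>"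
    by (rule le_less_trans) simp
qed

lemma AE_pcomb_inverse_bounded_iff:
  fixes a :: "'q::finite \<Rightarrow> 'p \<Rightarrow> complex"
  shows "(AE p in M. invertible (pcomb a A p)) \<and>
      (\<forall>i. ess_sup M (\<lambda>p. ereal (norm (mat (a i p) ** matrix_inv (pcomb a A p)))) < \<infinity>)
    \<longleftrightarrow> (\<exists>K. AE p in M. pcomb_inverse_bounded a A K p)"
proof
  assume asm: "(AE p in M. invertible (pcomb a A p)) \<and>
      (\<forall>i. ess_sup M (\<lambda>p. ereal (norm (mat (a i p) ** matrix_inv (pcomb a A p)))) < \<infinity>)"
  hence "\<forall>i. \<exists>K. AE p in M. norm (mat (a i p) ** matrix_inv (pcomb a A p)) \<le> K"
    by (simp only: ess_sup_less_top_iff) blast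
  then obtain Ki where Ki: "\<forall>i. AE p in M. norm (mat (a i p) ** matrix_inv (pcomb a A p)) \<le> Ki i"
    by (rule choice[THEN exE])
  have Ki_le: "Ki i \<le> Max (range Ki)" for i by simp
  have "AE p in M. \<forall>i\<in>UNIV. norm (mat (a i p) ** matrix_inv (pcomb a A p)) \<le> Ki i"
    by (rule AE_finite_allI) (simp_all add: Ki)
  moreover have "AE p in M. invertible (pcomb a A p)" using asm by blast
  ultimately have "AE p in M. pcomb_inverse_bounded a A (Max (range Ki)) p"
  proof eventually_elim
    case (elim p)
    have "norm (mat (a i p) ** matrix_inv (pcomb a A p)) \<le> Max (range Ki)" for i
      using elim(1) Ki_le[of i] by (meson UNIV_I order_trans)
    with elim(2) show ?case by (simp add: pcomb_inverse_bounded_def)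
  qed
  thus "\<exists>K. AE p in M. pcomb_inverse_bounded a A K p" ..
next
  assume "\<exists>K. AE p in M. pcomb_inverse_bounded a A K p"
  then obtain K where "AE p in M. pcomb_inverse_bounded a A K p" ..
  hence inv: "AE p in M. invertible (pcomb a A p)"
    and bnd: "\<And>i. AE p in M. norm (mat (a i p) ** matrix_inv (pcomb a A p)) \<le> K"
    unfolding pcomb_inverse_bounded_def by (auto elim: eventually_mono)
  have "ess_sup M (\<lambda>p. ereal (norm (mat (a i p) ** matrix_inv (pcomb a A p)))) < \<infinity>" for i
    unfolding ess_sup_less_top_iff using bnd by blast
  with inv show "(AE p in M. invertible (pcomb a A p)) \<and>
      (\<forall>i. ess_sup M (\<lambda>p. ereal (norm (mat (a i p) ** matrix_inv (pcomb a A p)))) < \<infinity>)"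
    by blast
qed

lemma open_AE_pcomb_inverse_bounded:
  fixes a :: "'q::finite \<Rightarrow> 'p \<Rightarrow> complex"
  shows "open {A :: real^'r^'r^'q. \<exists>K. AE p in M. pcomb_inverse_bounded a A K p}"
  unfolding open_contains_ball
proof (intro ballI)
  fix A assume "A \<in> {A. \<exists>K. AE p in M. pcomb_inverse_bounded a A K p}"
  then obtain K0 where "AE p in M. pcomb_inverse_bounded a A K0 p" by blast
  \<comment> \<open>K0 may be negative if M is a null measure.\<close>
  define K where "K = max K0 0"
  have A_bnd: "AE p in M. pcomb_inverse_bounded a A K p"
    using \<open>AE p in M. _\<close> by eventually_elim (simp add: K_def pcomb_inverse_bounded_mono)
  define d where "d = 1 / (2 * (real CARD('q) * K + 1))"
  have "0 \<le> real CARD('q) * K" by (simp add: K_def)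
  hence d_pos: "0 < d" by (simp add: d_def)
  have "ball A d \<subseteq> {A. \<exists>K. AE p in M. pcomb_inverse_bounded a A K p}"
  proof
    fix A' assume "A' \<in> ball A d"
    hence "norm (A' - A) \<le> d" by (simp add: dist_norm norm_minus_commute)
    hence "real CARD('q) * K * norm (A' - A) \<le> real CARD('q) * K * d"
      using \<open>0 \<le> real CARD('q) * K\<close> by (rule mult_left_mono)
    also have "\<dots> \<le> 1/2"
      using \<open>0 \<le> real CARD('q) * K\<close> by (simp add: d_def field_simps)
    finally have small: "real CARD('q) * K * norm (A' - A) \<le> 1/2" .
    have "AE p in M. pcomb_inverse_bounded a (A + (A' - A)) (2 * K) p"
      using A_bnd by eventually_elim (rule pcomb_inverse_bounded_add_small[OF _ small])
    thus "A' \<in> {A. \<exists>K. AE p in M. pcomb_inverse_bounded a A K p}" by auto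
  qed
  with d_pos show "\<exists>e>0. ball A e \<subseteq> {A. \<exists>K. AE p in M. pcomb_inverse_bounded a A K p}"
    by blast
qed

lemma nn_integral_transfer_power2_finite:
  fixes a :: "'qa::finite \<Rightarrow> 'p \<Rightarrow> complex" and b :: "'qb::finite \<Rightarrow> 'p \<Rightarrow> complex"
    and g :: "'qc::finite \<Rightarrow> 'p \<Rightarrow> complex"
  assumes [measurable]: "\<And>i. a i \<in> borel_measurable M" "\<And>j. b j \<in> borel_measurable M"
      "\<And>k. g k \<in> borel_measurable M"
    and finite_integral: "(\<integral>\<^sup>+ p. ((ennreal ((\<Sum>j\<in>UNIV. cmod (b j p)) * (\<Sum>k\<in>UNIV. cmod (g k p)))
                    / ennreal (\<Sum>i\<in>UNIV. cmod (a i p))) ^ 2) \<partial>M) < \<infinity>"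
    and bnd: "AE p in M. pcomb_inverse_bounded a A K p"
  shows "(\<integral>\<^sup>+ p. ennreal ((norm (pcomb g C p ** matrix_inv (pcomb a A p) ** pcomb b B p))\<^sup>2) \<partial>M) < \<infinity>"
proof -
  define c where "c = real CARD('qa) * K * norm C * norm B"
  define f where "f p = (ennreal ((\<Sum>j\<in>UNIV. cmod (b j p)) * (\<Sum>k\<in>UNIV. cmod (g k p)))
                    / ennreal (\<Sum>i\<in>UNIV. cmod (a i p))) ^ 2" for p
  have "AE p in M. ennreal ((norm (pcomb g C p ** matrix_inv (pcomb a A p) ** pcomb b B p))\<^sup>2)
      \<le> ennreal (c\<^sup>2) * f p"
    using bnd
  proof eventually_elim
    case (elim p)
    define q where "q = (\<Sum>j\<in>UNIV. cmod (b j p)) * (\<Sum>k\<in>UNIV. cmod (g k p)) / (\<Sum>i\<in>UNIV. cmod (a i p))"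
    have Sa_pos: "0 < (\<Sum>i\<in>UNIV. cmod (a i p))"
      using elim sum_cmod_coeffs_pos by (auto simp: pcomb_inverse_bounded_def)
    have "(norm (pcomb g C p ** matrix_inv (pcomb a A p) ** pcomb b B p))\<^sup>2 \<le> (c * q)\<^sup>2"
      using norm_transfer_le[OF elim, of g C b B] by (simp add: c_def q_def power_mono)
    also have "\<dots> = c\<^sup>2 * q\<^sup>2" by (simp add: power_mult_distrib)
    finally have "ennreal ((norm (pcomb g C p ** matrix_inv (pcomb a A p) ** pcomb b B p))\<^sup>2)
        \<le> ennreal (c\<^sup>2 * q\<^sup>2)"
      by (rule ennreal_leI)
    also have "\<dots> = ennreal (c\<^sup>2) * ennreal (q\<^sup>2)"
      by (simp add: ennreal_mult)
    also have "ennreal (q\<^sup>2) = f p"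
      unfolding f_def q_def using Sa_pos
      by (subst divide_ennreal) (auto simp: sum_nonneg ennreal_power)
    finally show ?case .
  qed
  hence "(\<integral>\<^sup>+ p. ennreal ((norm (pcomb g C p ** matrix_inv (pcomb a A p) ** pcomb b B p))\<^sup>2) \<partial>M)
      \<le> (\<integral>\<^sup>+ p. ennreal (c\<^sup>2) * f p \<partial>M)"
    by (rule nn_integral_mono_AE)
  also have "\<dots> = ennreal (c\<^sup>2) * (\<integral>\<^sup>+ p. f p \<partial>M)"
    by (rule nn_integral_cmult) (simp add: f_def)
  also have "\<dots> < \<infinity>"
    using finite_integral by (simp add: f_def ennreal_mult_less_top)
  finally show ?thesis .
qed

theorem lemma1:
  fixes M :: "(complex^'np) measure"
    and \<alpha> :: "'qa::finite \<Rightarrow> complex^'np \<Rightarrow> complex"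
    and \<beta> :: "'qb::finite \<Rightarrow> complex^'np \<Rightarrow> complex"
    and \<gamma> :: "'qc::finite \<Rightarrow> complex^'np \<Rightarrow> complex"
  assumes conj_space: "\<forall>p\<in>space M. conjv p \<in> space M"
    and conj_sets: "\<forall>S\<in>sets M. conjv ` S \<in> sets M"
    and conj_meas: "\<forall>S\<in>sets M. emeasure M (conjv ` S) = emeasure M S"
    and meas_\<alpha>: "\<forall>i. \<alpha> i \<in> borel_measurable M"
    and meas_\<beta>: "\<forall>j. \<beta> j \<in> borel_measurable M"
    and meas_\<gamma>: "\<forall>k. \<gamma> k \<in> borel_measurable M"
    and sym_\<alpha>: "\<forall>i. \<forall>p\<in>space M. \<alpha> i (conjv p) = cnj (\<alpha> i p)"
    and sym_\<beta>: "\<forall>j. \<forall>p\<in>space M. \<beta> j (conjv p) = cnj (\<beta> j p)"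
    and sym_\<gamma>: "\<forall>k. \<forall>p\<in>space M. \<gamma> k (conjv p) = cnj (\<gamma> k p)"
    and integ: "(\<integral>\<^sup>+ p. ((ennreal ((\<Sum>j\<in>UNIV. cmod (\<beta> j p)) * (\<Sum>k\<in>UNIV. cmod (\<gamma> k p)))
                    / ennreal (\<Sum>i\<in>UNIV. cmod (\<alpha> i p))) ^ 2) \<partial>M) < \<infinity>"
  defines "\<R> \<equiv> {(A :: real^'r^'r^'qa, B :: real^'nf^'r^'qb, C :: real^'r^'no^'qc).
                 (AE p in M. invertible (pcomb \<alpha> A p)) \<and>
                 (\<forall>i. ess_sup M (\<lambda>p. ereal (frob (mat (\<alpha> i p) ** matrix_inv (pcomb \<alpha> A p)))) < \<infinity>)}"
  shows "open \<R> \<and>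
         (\<forall>(A, B, C)\<in>\<R>.
            (\<integral>\<^sup>+ p. ennreal ((frob (pcomb \<gamma> C p ** matrix_inv (pcomb \<alpha> A p) ** pcomb \<beta> B p))\<^sup>2) \<partial>M) < \<infinity>)"
proof -
  let ?regular = "\<lambda>A :: real^'r^'r^'qa. \<exists>K. AE p in M. pcomb_inverse_bounded \<alpha> A K p"
  \<comment> \<open>The conjugation symmetries only make the realisation real; neither claim needs them.\<close>
  have R_eq: "\<R> = Collect ?regular \<times> UNIV"
    unfolding \<R>_def frob_eq_norm AE_pcomb_inverse_bounded_iff by auto
  have "open \<R>"
    unfolding R_eq by (intro open_Times open_AE_pcomb_inverse_bounded open_UNIV)
  moreover have "(\<integral>\<^sup>+ p. ennreal ((frob (pcomb \<gamma> C p ** matrix_inv (pcomb \<alpha> A p) ** pcomb \<beta> B p))\<^sup>2) \<partial>M) < \<infinity>"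
    if ABC: "(A, B, C) \<in> \<R>" for A B C
  proof -
    obtain K where "AE p in M. pcomb_inverse_bounded \<alpha> A K p"
      using ABC unfolding R_eq by auto
    with meas_\<alpha> meas_\<beta> meas_\<gamma> integ show ?thesis
      unfolding frob_eq_norm by (intro nn_integral_transfer_power2_finite) auto
  qed
  ultimately show ?thesis by auto
qed

end
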